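(* Let $k$ be a number field, $\mathcal G$ a finite group, $H$ a finite abelian group, $\mu:\mathcal G\to\mathrm{Aut}(H)$ an action, $k_1/k$ a Galois extension with group identified with $\mathcal G$, and $\tau\in H$. Then $k_1Z_{k_1/k,\mu,\tau}=k_1(\zeta_{o(\tau)})$.
   Context: $o(\tau)$ is the order of $\tau$ and $\zeta_t$ a primitive $t$-th root of unity. Let $\nu_{k,\tau}:\mathrm{Gal}(k(\zeta_{o(\tau)})/k)\to(\mathbb Z/o(\tau))^*$ be given by $g(\zeta_{o(\tau)})=\zeta_{o(\tau)}^{\nu_{k,\tau}(g)}$; $\tilde G_{k,\mu,\tau}=\{(g_1,g_2)\in\mathcal G\times\mathrm{Gal}(k(\zeta_{o(\tau)})/k):\mu(g_1)(\tau)=\tau^{\nu_{k,\tau}(g_2)}\}$. Identify $\mathrm{Gal}(k_1(\zeta_{o(\tau)})/k)$ with its image in $\mathcal G\times\mathrm{Gal}(k(\zeta_{o(\tau)})/k)$ via $g\mapsto(g|_{k_1},g|_{k(\zeta_{o(\tau)})})$, put $\tilde G_{k_1/k,\mu,\tau}=\tilde G_{k,\mu,\tau}\cap\mathrm{Gal}(k_1(\zeta_{o(\tau)})/k)$, and let $Z_{k_1/k,\mu,\tau}$ be its fixed field in $k_1(\zeta_{o(\tau)})$. *)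

theory Defs
  imports Complex_Main "HOL-Algebra.Algebra"
begin

text \<open>Fields are modelled concretely as subfields of the complex numbers
(every number field and every finite extension of it embeds in C).\<close>

definition subfield_C :: "complex set \<Rightarrow> bool" where
  "subfield_C K \<longleftrightarrow> 0 \<in> K \<and> 1 \<in> K \<and>
     (\<forall>x\<in>K. \<forall>y\<in>K. x + y \<in> K \<and> x - y \<in> K \<and> x * y \<in> K) \<and>
     (\<forall>x\<in>K. x \<noteq> 0 \<longrightarrow> inverse x \<in> K)"

definition fin_dim_over :: "complex set \<Rightarrow> complex set \<Rightarrow> bool" where
  "fin_dim_over K k \<longleftrightarrow> (\<exists>B. finite B \<and> B \<subseteq> K \<and>
     (\<forall>x\<in>K. \<exists>c. (\<forall>b\<in>B. c b \<in> k) \<and> x = (\<Sum>b\<in>B. c b * b)))"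

definition number_field :: "complex set \<Rightarrow> bool" where
  "number_field k \<longleftrightarrow> subfield_C k \<and> fin_dim_over k (of_rat ` \<rat>)"

definition gal_aut :: "complex set \<Rightarrow> complex set \<Rightarrow> (complex \<Rightarrow> complex) set" where
  "gal_aut K k = {\<sigma>. \<sigma> \<in> extensional K \<and> bij_betw \<sigma> K K \<and>
     (\<forall>x\<in>K. \<forall>y\<in>K. \<sigma> (x + y) = \<sigma> x + \<sigma> y \<and> \<sigma> (x * y) = \<sigma> x * \<sigma> y) \<and>
     (\<forall>x\<in>k. \<sigma> x = x)}"

definition GalGroup :: "complex set \<Rightarrow> complex set \<Rightarrow> (complex \<Rightarrow> complex) monoid" where
  "GalGroup K k = \<lparr>carrier = gal_aut K k, monoid.mult = (\<lambda>\<sigma> \<rho>. compose K \<sigma> \<rho>),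
                   monoid.one = (\<lambda>x\<in>K. x)\<rparr>"

definition fixed_field :: "complex set \<Rightarrow> (complex \<Rightarrow> complex) set \<Rightarrow> complex set" where
  "fixed_field K S = {x\<in>K. \<forall>\<sigma>\<in>S. \<sigma> x = x}"

text \<open>Finite Galois extension K/k (Artin: finite, and the fixed field of Aut(K/k) is k).\<close>
definition galois_ext :: "complex set \<Rightarrow> complex set \<Rightarrow> bool" where
  "galois_ext K k \<longleftrightarrow> subfield_C k \<and> subfield_C K \<and> k \<subseteq> K \<and> fin_dim_over K k \<and>
     fixed_field K (gal_aut K k) = k"

definition gen_field :: "complex set \<Rightarrow> complex set" where
  "gen_field S = \<Inter> {F. subfield_C F \<and> S \<subseteq> F}"

definition primitive_root :: "nat \<Rightarrow> complex \<Rightarrow> bool" where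
  "primitive_root t z \<longleftrightarrow> z ^ t = 1 \<and> (\<forall>m. 0 < m \<and> m < t \<longrightarrow> z ^ m \<noteq> 1)"

text \<open>The group tilde G_{k1/k,mu,tau}, viewed inside Gal(k1(zeta)/k); iota identifies
Gal(k1/k) with the abstract group G, and g restricted to k(zeta) is encoded by g zeta = zeta^n.\<close>
definition tildeG ::
  "complex set \<Rightarrow> complex set \<Rightarrow> ('g, 'c) monoid_scheme \<Rightarrow> ('h, 'd) monoid_scheme \<Rightarrow>
   ((complex \<Rightarrow> complex) \<Rightarrow> 'g) \<Rightarrow> ('g \<Rightarrow> 'h \<Rightarrow> 'h) \<Rightarrow> 'h \<Rightarrow> complex \<Rightarrow> (complex \<Rightarrow> complex) set" where
  "tildeG k k1 G H \<iota> \<mu> \<tau> \<zeta> =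
     {g \<in> gal_aut (gen_field (k1 \<union> {\<zeta>})) k.
        \<exists>n::nat. g \<zeta> = \<zeta> ^ n \<and> \<mu> (\<iota> (restrict g k1)) \<tau> = \<tau> [^]\<^bsub>H\<^esub> n}"

definition Zfield ::
  "complex set \<Rightarrow> complex set \<Rightarrow> ('g, 'c) monoid_scheme \<Rightarrow> ('h, 'd) monoid_scheme \<Rightarrow>
   ((complex \<Rightarrow> complex) \<Rightarrow> 'g) \<Rightarrow> ('g \<Rightarrow> 'h \<Rightarrow> 'h) \<Rightarrow> 'h \<Rightarrow> complex \<Rightarrow> complex set" where
  "Zfield k k1 G H \<iota> \<mu> \<tau> \<zeta> =
     fixed_field (gen_field (k1 \<union> {\<zeta>})) (tildeG k k1 G H \<iota> \<mu> \<tau> \<zeta>)"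

end

theory Submission
  imports Defs "HOL-Computational_Algebra.Polynomial"
begin

text \<open>
Write K = k1(zeta) and T for tilde-G, a finite group of k-automorphisms of K; every element of
T maps k1 to itself because k1/k is Galois. If g in T fixes k1, then tau^n = tau for the exponent
n with g zeta = zeta^n, so o(tau) divides n - 1 and g fixes zeta as well: T acts faithfully on
k1. Since a field is not a finite union of proper subfields, some theta in k1 is moved by every
nontrivial element of T. Let L in k1[X] be the Lagrange polynomial with L(theta) = 1 and
L(g theta) = 0 for g <> 1. Then every y in K satisfies
  y = (SUM g:T. L(g theta) * g y) = (SUM j. coeff L j * (SUM g:T. g (theta^j * y))),
and the inner sums lie in the fixed field Z of T, so K = k1 Z.
\<close>

lemma subfield_C_0: "subfield_C F \<Longrightarrow> 0 \<in> F"
  and subfield_C_1: "subfield_C F \<Longrightarrow> 1 \<in> F"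
  and subfield_C_add: "subfield_C F \<Longrightarrow> x \<in> F \<Longrightarrow> y \<in> F \<Longrightarrow> x + y \<in> F"
  and subfield_C_diff: "subfield_C F \<Longrightarrow> x \<in> F \<Longrightarrow> y \<in> F \<Longrightarrow> x - y \<in> F"
  and subfield_C_mult: "subfield_C F \<Longrightarrow> x \<in> F \<Longrightarrow> y \<in> F \<Longrightarrow> x * y \<in> F"
  by (auto simp: subfield_C_def)

lemma subfield_C_inverse: "subfield_C F \<Longrightarrow> x \<in> F \<Longrightarrow> inverse x \<in> F"
  by (cases "x = 0") (auto simp: subfield_C_def)

lemma subfield_C_uminus: "subfield_C F \<Longrightarrow> x \<in> F \<Longrightarrow> - x \<in> F"
  using subfield_C_diff[of F 0 x] subfield_C_0[of F] by simp

lemma subfield_C_pow: "subfield_C F \<Longrightarrow> x \<in> F \<Longrightarrow> x ^ n \<in> F"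
  by (induction n) (auto intro: subfield_C_1 subfield_C_mult)

lemma subfield_C_of_nat: "subfield_C F \<Longrightarrow> of_nat n \<in> F"
  by (induction n) (auto intro: subfield_C_0 subfield_C_1 subfield_C_add)

lemma subfield_C_sum: "subfield_C F \<Longrightarrow> (\<And>a. a \<in> A \<Longrightarrow> u a \<in> F) \<Longrightarrow> sum u A \<in> F"
  by (induction A rule: infinite_finite_induct) (auto intro: subfield_C_0 subfield_C_add)

lemma subfield_C_prod: "subfield_C F \<Longrightarrow> (\<And>a. a \<in> A \<Longrightarrow> u a \<in> F) \<Longrightarrow> prod u A \<in> F"
  by (induction A rule: infinite_finite_induct) (auto intro: subfield_C_1 subfield_C_mult)

lemma subfield_C_mult_cancel_left:
  assumes "subfield_C F" "a \<in> F" "a \<noteq> 0" "a * y \<in> F"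
  shows "y \<in> F"
  using subfield_C_mult[OF assms(1) subfield_C_inverse[OF assms(1,2)] assms(4)] assms(3)
  by (simp add: mult.assoc[symmetric])

lemma subfield_C_gen_field: "subfield_C (gen_field S)"
  unfolding gen_field_def by (auto simp: subfield_C_def)

lemma gen_field_subset: "S \<subseteq> gen_field S"
  unfolding gen_field_def by auto

lemma gen_field_least: "subfield_C F \<Longrightarrow> S \<subseteq> F \<Longrightarrow> gen_field S \<subseteq> F"
  unfolding gen_field_def by auto

definition field_hom_on :: "complex set \<Rightarrow> (complex \<Rightarrow> complex) \<Rightarrow> bool" where
  "field_hom_on F f \<longleftrightarrow>
     (\<forall>x\<in>F. \<forall>y\<in>F. f (x + y) = f x + f y \<and> f (x * y) = f x * f y) \<and> f 1 = 1"

lemma field_hom_on_id: "field_hom_on F (\<lambda>x. x)"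
  by (simp add: field_hom_on_def)

lemma field_hom_on_subset: "field_hom_on K f \<Longrightarrow> F \<subseteq> K \<Longrightarrow> field_hom_on F f"
  by (auto simp: field_hom_on_def)

context
  fixes F f assumes F: "subfield_C F" and f: "field_hom_on F f"
begin

lemma field_hom_on_add: "x \<in> F \<Longrightarrow> y \<in> F \<Longrightarrow> f (x + y) = f x + f y"
  and field_hom_on_mult: "x \<in> F \<Longrightarrow> y \<in> F \<Longrightarrow> f (x * y) = f x * f y"
  and field_hom_on_1: "f 1 = 1"
  using f by (auto simp: field_hom_on_def)

lemma field_hom_on_0: "f 0 = 0"
  using field_hom_on_add[of 0 0] subfield_C_0[OF F] by simp

lemma field_hom_on_uminus: "x \<in> F \<Longrightarrow> f (- x) = - f x"
  using field_hom_on_add[of x "- x"] subfield_C_uminus[OF F, of x] field_hom_on_0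
  by (simp add: add.commute eq_neg_iff_add_eq_0)

lemma field_hom_on_diff: "x \<in> F \<Longrightarrow> y \<in> F \<Longrightarrow> f (x - y) = f x - f y"
  using field_hom_on_add[of x "- y"] field_hom_on_uminus[of y] subfield_C_uminus[OF F, of y]
  by simp

lemma field_hom_on_pow: "x \<in> F \<Longrightarrow> f (x ^ n) = f x ^ n"
  by (induction n) (auto simp: field_hom_on_1 field_hom_on_mult subfield_C_pow[OF F])

lemma field_hom_on_sum: "(\<And>a. a \<in> A \<Longrightarrow> u a \<in> F) \<Longrightarrow> f (sum u A) = (\<Sum>a\<in>A. f (u a))"
  by (induction A rule: infinite_finite_induct)
     (auto simp: field_hom_on_0 field_hom_on_add subfield_C_sum[OF F])

lemma field_hom_on_inverse: "x \<in> F \<Longrightarrow> x \<noteq> 0 \<Longrightarrow> f (inverse x) = inverse (f x)"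
  using field_hom_on_mult[of x "inverse x"] subfield_C_inverse[OF F, of x] field_hom_on_1
  by (metis inverse_unique right_inverse)

end

lemma subfield_C_equalizer:
  assumes "subfield_C F" "field_hom_on F f" "field_hom_on F g"
  shows "subfield_C {x\<in>F. f x = g x}"
  using assms
  by (auto simp: subfield_C_def field_hom_on_0 field_hom_on_1 field_hom_on_add field_hom_on_diff
      field_hom_on_mult field_hom_on_inverse)

lemma field_hom_on_gen_field_eqI:
  assumes "field_hom_on (gen_field S) f" "field_hom_on (gen_field S) g"
    and "\<And>x. x \<in> S \<Longrightarrow> f x = g x" and "x \<in> gen_field S"
  shows "f x = g x"
proof -
  have "gen_field S \<subseteq> {x\<in>gen_field S. f x = g x}"
    using assms(3) gen_field_subset
    by (intro gen_field_least subfield_C_equalizer[OF subfield_C_gen_field assms(1,2)]) blast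
  then show ?thesis using assms(4) by blast
qed

lemma gal_aut_bij: "\<sigma> \<in> gal_aut K k \<Longrightarrow> bij_betw \<sigma> K K"
  and gal_aut_extensional: "\<sigma> \<in> gal_aut K k \<Longrightarrow> \<sigma> \<in> extensional K"
  and gal_aut_fixes: "\<sigma> \<in> gal_aut K k \<Longrightarrow> x \<in> k \<Longrightarrow> \<sigma> x = x"
  unfolding gal_aut_def by auto

lemma gal_aut_in: "\<sigma> \<in> gal_aut K k \<Longrightarrow> x \<in> K \<Longrightarrow> \<sigma> x \<in> K"
  using gal_aut_bij bij_betwE by blast

lemma gal_aut_inj_on: "\<sigma> \<in> gal_aut K k \<Longrightarrow> inj_on \<sigma> K"
  using gal_aut_bij bij_betw_def by blast

lemma gal_aut_antimono: "k' \<subseteq> k \<Longrightarrow> gal_aut K k \<subseteq> gal_aut K k'"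
  unfolding gal_aut_def by auto

lemma gal_aut_field_hom_on:
  assumes \<sigma>: "\<sigma> \<in> gal_aut K k" and "1 \<in> K"
  shows "field_hom_on K \<sigma>"
proof -
  obtain u where u: "u \<in> K" "\<sigma> u = 1"
    using gal_aut_bij[OF \<sigma>] \<open>1 \<in> K\<close> by (metis bij_betw_iff_bijections)
  have "\<sigma> (1 * u) = \<sigma> 1 * \<sigma> u" using \<sigma> u(1) \<open>1 \<in> K\<close> unfolding gal_aut_def by blast
  then have "\<sigma> 1 = 1" using u(2) by simp
  then show ?thesis using \<sigma> unfolding gal_aut_def field_hom_on_def by blast
qed

lemma gal_aut_eqI:
  assumes "\<sigma> \<in> gal_aut K k" "\<rho> \<in> gal_aut K k" "\<And>x. x \<in> K \<Longrightarrow> \<sigma> x = \<rho> x"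
  shows "\<sigma> = \<rho>"
  using assms gal_aut_extensional extensionalityI by metis

lemma gal_aut_id: "subfield_C K \<Longrightarrow> k \<subseteq> K \<Longrightarrow> (\<lambda>x\<in>K. x) \<in> gal_aut K k"
  unfolding gal_aut_def by (auto simp: bij_betw_def inj_on_def subfield_C_add subfield_C_mult)

lemma gal_aut_compose:
  assumes "\<sigma> \<in> gal_aut K k" "\<rho> \<in> gal_aut K k" "subfield_C K" "k \<subseteq> K"
  shows "compose K \<rho> \<sigma> \<in> gal_aut K k"
proof -
  have "bij_betw (compose K \<rho> \<sigma>) K K"
    using assms gal_aut_bij bij_betw_compose by blast
  then show ?thesis
    using assms gal_aut_in[OF assms(1)] subfield_C_add[OF assms(3)] subfield_C_mult[OF assms(3)]
    unfolding gal_aut_def compose_def by auto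
qed

lemma restrict_gal_aut:
  assumes "subfield_C k1" "k \<subseteq> k1" "k1 \<subseteq> K" "\<sigma> \<in> gal_aut K k" "\<sigma> ` k1 = k1"
  shows "restrict \<sigma> k1 \<in> gal_aut k1 k"
proof -
  have "inj_on \<sigma> k1" using gal_aut_inj_on[OF assms(4)] assms(3) inj_on_subset by blast
  then have "bij_betw (restrict \<sigma> k1) k1 k1"
    using assms(5) by (simp add: bij_betw_def inj_on_restrict_eq image_restrict_eq)
  then show ?thesis
    using assms subfield_C_add[OF assms(1)] subfield_C_mult[OF assms(1)]
    unfolding gal_aut_def by (auto simp: subset_iff)
qed

lemma coeff_mult_in_subfield:
  assumes "subfield_C F" "\<And>j. coeff p j \<in> F" "\<And>j. coeff q j \<in> F"
  shows "coeff (p * q) n \<in> F"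
  unfolding coeff_mult using assms by (intro subfield_C_sum subfield_C_mult) auto

lemma coeff_linear_in_subfield:
  "subfield_C F \<Longrightarrow> c \<in> F \<Longrightarrow> coeff [:c, 1:] j \<in> F"
  by (cases j) (auto simp: subfield_C_1 subfield_C_0 coeff_pCons split: nat.splits)

lemma coeff_prod_linear_in_subfield:
  assumes "subfield_C F" "\<And>a. a \<in> A \<Longrightarrow> r a \<in> F"
  shows "coeff (\<Prod>a\<in>A. [:- r a, 1:]) j \<in> F"
  using assms(2)
proof (induction A arbitrary: j rule: infinite_finite_induct)
  case (insert x A)
  show ?case unfolding prod.insert[OF insert(1,2)]
    by (rule coeff_mult_in_subfield)
       (use insert assms(1) in \<open>auto intro: coeff_linear_in_subfield subfield_C_uminus\<close>)
qed (use assms(1) in \<open>auto simp: coeff_1 subfield_C_0 subfield_C_1\<close>)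

lemma map_poly_mult_field_hom_on:
  assumes "subfield_C F" "field_hom_on F f" "\<And>j. coeff p j \<in> F" "\<And>j. coeff q j \<in> F"
  shows "map_poly f (p * q) = map_poly f p * map_poly f q"
proof (rule poly_eqI)
  fix n
  note coeff_map = coeff_map_poly[of f, OF field_hom_on_0[OF assms(1,2)]]
  show "coeff (map_poly f (p * q)) n = coeff (map_poly f p * map_poly f q) n"
    unfolding coeff_map coeff_mult
    using assms by (simp add: field_hom_on_sum field_hom_on_mult subfield_C_mult coeff_map)
qed

lemma map_poly_prod_linear:
  assumes "subfield_C F" "field_hom_on F f" "\<And>a. a \<in> A \<Longrightarrow> r a \<in> F"
  shows "map_poly f (\<Prod>a\<in>A. [:- r a, 1:]) = (\<Prod>a\<in>A. [:- f (r a), 1:])"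
  using assms(3)
proof (induction A rule: infinite_finite_induct)
  case (insert x A)
  have f0: "f 0 = 0" and f1: "f 1 = 1"
    using field_hom_on_0[OF assms(1,2)] field_hom_on_1[OF assms(1,2)] .
  have "map_poly f [:- r x, 1:] = [:- f (r x), 1:]"
    using insert f0 f1 field_hom_on_uminus[OF assms(1,2)]
    by (intro poly_eqI) (auto simp: coeff_map_poly coeff_pCons split: nat.splits)
  moreover have "map_poly f (\<Prod>a\<in>insert x A. [:- r a, 1:]) =
        map_poly f [:- r x, 1:] * map_poly f (\<Prod>a\<in>A. [:- r a, 1:])"
    unfolding prod.insert[OF insert(1,2)]
    by (rule map_poly_mult_field_hom_on[OF assms(1,2)]) (use insert assms(1) in
        \<open>auto intro: coeff_linear_in_subfield subfield_C_uminus coeff_prod_linear_in_subfield\<close>)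
  ultimately show ?case using insert by simp
qed (use assms in \<open>auto simp: field_hom_on_1\<close>)

lemma field_hom_on_poly:
  assumes "subfield_C K" "field_hom_on K f" "\<And>j. coeff p j \<in> K" "\<And>j. f (coeff p j) = coeff p j"
    and "y \<in> K"
  shows "f (poly p y) = poly p (f y)"
  unfolding poly_altdef using assms
  by (simp add: field_hom_on_sum field_hom_on_mult field_hom_on_pow subfield_C_mult subfield_C_pow)

lemma lagrange_poly_exists:
  assumes "subfield_C F" "finite R" "R \<subseteq> F" "\<theta> \<in> F" "\<theta> \<notin> R"
  shows "\<exists>L. (\<forall>j. coeff L j \<in> F) \<and> poly L \<theta> = 1 \<and> (\<forall>r\<in>R. poly L r = 0)"
proof -
  define c where "c = (\<Prod>r\<in>R. \<theta> - r)"
  define L where "L = smult (inverse c) (\<Prod>r\<in>R. [:- r, 1:])"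
  have c: "c \<noteq> 0" "c \<in> F"
    unfolding c_def using assms by (auto intro: subfield_C_prod subfield_C_diff)
  have "coeff L j \<in> F" for j
    unfolding L_def coeff_smult using assms(1,3) c(2)
    by (intro subfield_C_mult subfield_C_inverse coeff_prod_linear_in_subfield) auto
  moreover have poly_L: "poly L z = inverse c * (\<Prod>r\<in>R. z - r)" for z
    unfolding L_def by (simp add: poly_prod)
  moreover have "poly L \<theta> = 1" using c(1) poly_L unfolding c_def by simp
  moreover have "poly L r = 0" if "r \<in> R" for r using poly_L assms(2) that by simp
  ultimately show ?thesis by blast
qed

section \<open>Automorphisms preserve a Galois subextension\<close>

lemma orbit_poly_coeff_in_base:
  assumes "galois_ext k1 k" "finite (gal_aut k1 k)" "x \<in> k1"
  shows "coeff (\<Prod>r\<in>(\<lambda>\<sigma>. \<sigma> x) ` gal_aut k1 k. [:- r, 1:]) j \<in> k"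
proof -
  let ?\<Gamma> = "gal_aut k1 k"
  let ?R = "(\<lambda>\<sigma>. \<sigma> x) ` ?\<Gamma>"
  let ?p = "\<Prod>r\<in>?R. [:- r, 1:]"
  have k1: "subfield_C k1" "k \<subseteq> k1" "fixed_field k1 ?\<Gamma> = k"
    using assms(1) by (auto simp: galois_ext_def)
  have R: "?R \<subseteq> k1" using assms(3) gal_aut_in by blast
  have "\<rho> (coeff ?p j) = coeff ?p j" if \<rho>: "\<rho> \<in> ?\<Gamma>" for \<rho>
  proof -
    have hom: "field_hom_on k1 \<rho>" using gal_aut_field_hom_on[OF \<rho> subfield_C_1[OF k1(1)]] .
    have "compose k1 \<rho> \<sigma> \<in> ?\<Gamma>" if "\<sigma> \<in> ?\<Gamma>" for \<sigma>
      using gal_aut_compose[OF that \<rho> k1(1,2)] .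
    then have "\<rho> (\<sigma> x) \<in> ?R" if "\<sigma> \<in> ?\<Gamma>" for \<sigma>
      using that assms(3) image_eqI[of "\<rho> (\<sigma> x)" "\<lambda>\<sigma>. \<sigma> x" "compose k1 \<rho> \<sigma>"]
      by (simp add: compose_def)
    then have "\<rho> ` ?R \<subseteq> ?R" by blast
    moreover have "inj_on \<rho> ?R" using gal_aut_inj_on[OF \<rho>] R inj_on_subset by blast
    ultimately have perm: "\<rho> ` ?R = ?R" by (rule endo_inj_surj[OF finite_imageI[OF assms(2)]])
    have "\<rho> (coeff ?p j) = coeff (map_poly \<rho> ?p) j"
      using coeff_map_poly[of \<rho>, OF field_hom_on_0[OF k1(1) hom]] by simp
    also have "map_poly \<rho> ?p = (\<Prod>r\<in>?R. [:- \<rho> r, 1:])"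
      using map_poly_prod_linear[OF k1(1) hom, of ?R "\<lambda>r. r"] R by auto
    also have "\<dots> = (\<Prod>r\<in>\<rho> ` ?R. [:- r, 1:])"
      using prod.reindex[OF \<open>inj_on \<rho> ?R\<close>, of "\<lambda>r. [:- r, 1:]"] by (simp add: comp_def)
    finally show ?thesis using perm by simp
  qed
  moreover have "coeff ?p j \<in> k1" using coeff_prod_linear_in_subfield[OF k1(1), of ?R "\<lambda>r. r"] R by auto
  ultimately have "coeff ?p j \<in> fixed_field k1 ?\<Gamma>" unfolding fixed_field_def by blast
  then show ?thesis using k1(3) by simp
qed

lemma gal_aut_image_galois_subfield:
  assumes "galois_ext k1 k" "finite (gal_aut k1 k)" "subfield_C K" "k1 \<subseteq> K"
    and \<sigma>: "\<sigma> \<in> gal_aut K k"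
  shows "\<sigma> ` k1 = k1"
proof -
  have k: "subfield_C k1" "k \<subseteq> k1" using assms(1) by (auto simp: galois_ext_def)
  have hom: "field_hom_on K \<sigma>" using gal_aut_field_hom_on[OF \<sigma> subfield_C_1[OF assms(3)]] .
  have invariant: "\<exists>R. finite R \<and> R \<subseteq> k1 \<and> x \<in> R \<and> \<sigma> ` R \<subseteq> R" if x: "x \<in> k1" for x
  proof -
    let ?R = "(\<lambda>\<rho>. \<rho> x) ` gal_aut k1 k"
    let ?p = "\<Prod>r\<in>?R. [:- r, 1:]"
    have xR: "x \<in> ?R" using gal_aut_id[OF k] x image_eqI[of x "\<lambda>\<rho>. \<rho> x" "\<lambda>x\<in>k1. x"] by simp
    have R: "?R \<subseteq> k1" using x gal_aut_in by blast
    have roots: "poly ?p z = 0 \<longleftrightarrow> z \<in> ?R" for z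
      using assms(2) by (simp add: poly_prod)
    have "\<sigma> r \<in> ?R" if r: "r \<in> ?R" for r
    proof -
      have "\<And>j. coeff ?p j \<in> k" using orbit_poly_coeff_in_base[OF assms(1,2) x] .
      then have "poly ?p (\<sigma> r) = \<sigma> (poly ?p r)"
        using gal_aut_fixes[OF \<sigma>] r R k(2) assms(4)
        by (intro field_hom_on_poly[OF assms(3) hom, symmetric]) blast+
      moreover have "poly ?p r = 0" using roots r by blast
      ultimately have "poly ?p (\<sigma> r) = 0" using field_hom_on_0[OF assms(3) hom] by simp
      then show ?thesis using roots by blast
    qed
    then show ?thesis using finite_imageI[OF assms(2)] xR R by (intro exI[of _ ?R]) blast
  qed
  show ?thesis
  proof
    show "\<sigma> ` k1 \<subseteq> k1" using invariant by blast
    show "k1 \<subseteq> \<sigma> ` k1"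
    proof
      fix x assume "x \<in> k1"
      then obtain R where R: "finite R" "R \<subseteq> k1" "x \<in> R" "\<sigma> ` R \<subseteq> R"
        using invariant by blast
      have "inj_on \<sigma> R" using gal_aut_inj_on[OF \<sigma>] R(2) assms(4) inj_on_subset by blast
      then show "x \<in> \<sigma> ` k1" using endo_inj_surj[OF R(1,4)] R(2,3) by blast
    qed
  qed
qed

section \<open>A field is not a finite union of proper subfields\<close>

lemma subfield_C_affine_line:
  assumes "subfield_C E" "x + of_nat s * y \<in> E" "x + of_nat t * y \<in> E" "s \<noteq> t"
  shows "x \<in> E \<and> y \<in> E"
proof -
  have "(of_nat s - of_nat t) * y \<in> E"
    using subfield_C_diff[OF assms(1,2,3)] by (simp add: algebra_simps)
  moreover have "of_nat s - of_nat t \<in> E"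
    using assms(1) by (intro subfield_C_diff subfield_C_of_nat)
  moreover have "(of_nat s - of_nat t :: complex) \<noteq> 0" using assms(4) by simp
  ultimately have y: "y \<in> E" using subfield_C_mult_cancel_left[OF assms(1)] by blast
  have "(x + of_nat s * y) - of_nat s * y \<in> E"
    using assms(1,2) y by (intro subfield_C_diff subfield_C_mult subfield_C_of_nat)
  then show ?thesis using y by simp
qed

lemma ex_not_in_proper_subfields:
  assumes "subfield_C K" "finite \<E>"
    and "\<And>E. E \<in> \<E> \<Longrightarrow> subfield_C E \<and> E \<subseteq> K \<and> E \<noteq> K"
  shows "\<exists>x\<in>K. \<forall>E\<in>\<E>. x \<notin> E"
  using assms(2,3)
proof (induction \<E> rule: finite_induct)
  case empty
  then show ?case using subfield_C_0[OF assms(1)] by blast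
next
  case (insert E \<E>)
  obtain x where x: "x \<in> K" "\<forall>E'\<in>\<E>. x \<notin> E'" using insert by blast
  obtain y where y: "y \<in> K" "y \<notin> E" using insert(4) by blast
  \<comment> \<open>Each member of insert E \<E> misses x or y, so it meets the line x + t y at most once.\<close>
  have "\<exists>t\<in>{..Suc (card \<E>)}. \<forall>E'\<in>insert E \<E>. x + of_nat t * y \<notin> E'"
  proof (rule ccontr)
    assume "\<not> ?thesis"
    then obtain c where c: "\<And>t. t \<le> Suc (card \<E>) \<Longrightarrow> c t \<in> insert E \<E> \<and> x + of_nat t * y \<in> c t"
      by (metis atMost_iff)
    have "inj_on c {..Suc (card \<E>)}"
    proof (rule inj_onI, rule ccontr)
      fix s t assume "s \<in> {..Suc (card \<E>)}" "t \<in> {..Suc (card \<E>)}" "c s = c t" "s \<noteq> t"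
      then have "x \<in> c t \<and> y \<in> c t"
        using c insert(4) by (intro subfield_C_affine_line[of "c t" x s y t]) auto
      then show False using c[of t] x y \<open>t \<in> {..Suc (card \<E>)}\<close> by auto
    qed
    then have "card {..Suc (card \<E>)} \<le> card (insert E \<E>)"
      using c insert(1) by (intro card_inj_on_le) auto
    then show False using insert(1,2) by simp
  qed
  then obtain t where "\<forall>E'\<in>insert E \<E>. x + of_nat t * y \<notin> E'" by blast
  moreover have "x + of_nat t * y \<in> K"
    using assms(1) x(1) y(1) by (intro subfield_C_add subfield_C_mult subfield_C_of_nat)
  ultimately show ?case by blast
qed

section \<open>Finite groups of automorphisms acting faithfully on a subfield\<close>

locale finite_aut_group =
  fixes K :: "complex set" and T :: "(complex \<Rightarrow> complex) set"
  assumes subfield_K: "subfield_C K"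
    and finite_T: "finite T"
    and T_gal_aut: "T \<subseteq> gal_aut K {}"
    and id_in_T: "(\<lambda>x\<in>K. x) \<in> T"
    and compose_in_T: "\<And>f g. f \<in> T \<Longrightarrow> g \<in> T \<Longrightarrow> compose K f g \<in> T"
begin

lemma field_hom_on_T: "g \<in> T \<Longrightarrow> field_hom_on K g"
  using T_gal_aut gal_aut_field_hom_on subfield_C_1[OF subfield_K] by blast

lemma T_apply_in: "g \<in> T \<Longrightarrow> x \<in> K \<Longrightarrow> g x \<in> K"
  using T_gal_aut gal_aut_in by blast

lemma orbit_sum_in_fixed_field:
  assumes y: "y \<in> K"
  shows "(\<Sum>g\<in>T. g y) \<in> fixed_field K T"
proof -
  have "f (\<Sum>g\<in>T. g y) = (\<Sum>g\<in>T. g y)" if f: "f \<in> T" for f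
  proof -
    have inj: "inj_on (compose K f) T"
    proof (rule inj_onI)
      fix a b assume ab: "a \<in> T" "b \<in> T" "compose K f a = compose K f b"
      have "a x = b x" if "x \<in> K" for x
        using fun_cong[OF ab(3), of x] that T_apply_in ab(1,2) f T_gal_aut gal_aut_inj_on
        by (simp add: compose_def inj_on_def) blast
      then show "a = b" using ab(1,2) T_gal_aut gal_aut_eqI by blast
    qed
    have "f (\<Sum>g\<in>T. g y) = (\<Sum>g\<in>T. f (g y))"
      by (rule field_hom_on_sum[OF subfield_K field_hom_on_T[OF f]]) (use T_apply_in y in blast)
    also have "\<dots> = (\<Sum>g\<in>T. compose K f g y)" using y by (simp add: compose_def)
    also have "\<dots> = (\<Sum>g\<in>compose K f ` T. g y)" by (simp add: sum.reindex[OF inj])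
    also have "compose K f ` T = T"
      using endo_inj_surj[OF finite_T _ inj] compose_in_T f by blast
    finally show ?thesis .
  qed
  moreover have "(\<Sum>g\<in>T. g y) \<in> K" using y T_apply_in by (intro subfield_C_sum[OF subfield_K])
  ultimately show ?thesis unfolding fixed_field_def by blast
qed

lemma lagrange_orbit_sum_expansion:
  assumes \<theta>: "\<theta> \<in> K" and y: "y \<in> K" and "poly L \<theta> = 1"
    and "\<And>h. h \<in> T - {\<lambda>x\<in>K. x} \<Longrightarrow> poly L (h \<theta>) = 0"
  shows "y = (\<Sum>j\<le>degree L. coeff L j * (\<Sum>g\<in>T. g (\<theta> ^ j * y)))"
proof -
  have "(\<Sum>g\<in>T - {\<lambda>x\<in>K. x}. poly L (g \<theta>) * g y) = 0" using assms(4) by simp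
  then have "y = (\<Sum>g\<in>T. poly L (g \<theta>) * g y)"
    using sum.remove[OF finite_T id_in_T, of "\<lambda>g. poly L (g \<theta>) * g y"] assms(3) \<theta> y by simp
  also have "\<dots> = (\<Sum>g\<in>T. \<Sum>j\<le>degree L. coeff L j * g (\<theta> ^ j * y))"
  proof (rule sum.cong[OF refl])
    fix g assume "g \<in> T"
    note hom = field_hom_on_T[OF this]
    have "g (\<theta> ^ j * y) = g \<theta> ^ j * g y" for j
      using field_hom_on_mult[OF subfield_K hom subfield_C_pow[OF subfield_K \<theta>] y]
        field_hom_on_pow[OF subfield_K hom \<theta>] by simp
    then show "poly L (g \<theta>) * g y = (\<Sum>j\<le>degree L. coeff L j * g (\<theta> ^ j * y))"
      by (simp add: poly_altdef sum_distrib_right mult.assoc)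
  qed
  also have "\<dots> = (\<Sum>j\<le>degree L. coeff L j * (\<Sum>g\<in>T. g (\<theta> ^ j * y)))"
    by (simp add: sum.swap[of _ T] sum_distrib_left)
  finally show ?thesis .
qed

context
  fixes F :: "complex set"
  assumes subfield_F: "subfield_C F" and F_K: "F \<subseteq> K"
    and T_F: "\<And>g. g \<in> T \<Longrightarrow> g ` F \<subseteq> F"
    and faithful: "\<And>h. h \<in> T \<Longrightarrow> (\<And>x. x \<in> F \<Longrightarrow> h x = x) \<Longrightarrow> h = (\<lambda>x\<in>K. x)"
begin

lemma ex_separating_element: "\<exists>\<theta>\<in>F. \<forall>h\<in>T - {\<lambda>x\<in>K. x}. h \<theta> \<noteq> \<theta>"
proof -
  let ?\<E> = "(\<lambda>h. {x\<in>F. h x = x}) ` (T - {\<lambda>x\<in>K. x})"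
  have "\<exists>\<theta>\<in>F. \<forall>E\<in>?\<E>. \<theta> \<notin> E"
  proof (rule ex_not_in_proper_subfields[OF subfield_F])
    show "finite ?\<E>" using finite_T by simp
    fix E assume "E \<in> ?\<E>"
    then obtain h where h: "h \<in> T" "h \<noteq> (\<lambda>x\<in>K. x)" "E = {x\<in>F. h x = x}" by auto
    have "subfield_C E"
      unfolding h(3) using field_hom_on_subset[OF field_hom_on_T[OF h(1)] F_K]
      by (intro subfield_C_equalizer[OF subfield_F _ field_hom_on_id])
    moreover have "E \<noteq> F" using faithful[OF h(1)] h(2,3) by blast
    ultimately show "subfield_C E \<and> E \<subseteq> F \<and> E \<noteq> F" using h(3) by auto
  qed
  then obtain \<theta> where \<theta>: "\<theta> \<in> F" "\<forall>E\<in>?\<E>. \<theta> \<notin> E" by blast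
  have "h \<theta> \<noteq> \<theta>" if "h \<in> T - {\<lambda>x\<in>K. x}" for h
    using \<theta>(2)[rule_format, OF imageI[OF that]] \<theta>(1) by simp
  then show ?thesis using \<theta>(1) by blast
qed

theorem gen_field_fixed_field_eq: "gen_field (F \<union> fixed_field K T) = K"
proof
  let ?F' = "gen_field (F \<union> fixed_field K T)"
  let ?T' = "T - {\<lambda>x\<in>K. x}"
  show "?F' \<subseteq> K"
    using F_K subfield_K by (intro gen_field_least) (auto simp: fixed_field_def)
  obtain \<theta> where \<theta>: "\<theta> \<in> F" "\<forall>h\<in>?T'. h \<theta> \<noteq> \<theta>" using ex_separating_element by blast
  have "(\<lambda>h. h \<theta>) ` ?T' \<subseteq> F" using T_F \<theta>(1) by blast
  moreover have "\<theta> \<notin> (\<lambda>h. h \<theta>) ` ?T'" using \<theta>(2) by (metis imageE)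
  ultimately have "\<exists>L. (\<forall>j. coeff L j \<in> F) \<and> poly L \<theta> = 1 \<and> (\<forall>r\<in>(\<lambda>h. h \<theta>) ` ?T'. poly L r = 0)"
    using finite_T by (intro lagrange_poly_exists[OF subfield_F _ _ \<theta>(1)]) auto
  then obtain L
    where L: "\<forall>j. coeff L j \<in> F" "poly L \<theta> = 1" "\<forall>r\<in>(\<lambda>h. h \<theta>) ` ?T'. poly L r = 0"
    by blast
  show "K \<subseteq> ?F'"
  proof
    fix y assume y: "y \<in> K"
    have \<theta>_K: "\<theta> \<in> K" using \<theta>(1) F_K by blast
    have "(\<Sum>j\<le>degree L. coeff L j * (\<Sum>g\<in>T. g (\<theta> ^ j * y))) \<in> ?F'"
    proof (rule subfield_C_sum[OF subfield_C_gen_field], rule subfield_C_mult[OF subfield_C_gen_field])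
      fix j
      show "coeff L j \<in> ?F'" using L(1) gen_field_subset by blast
      have "\<theta> ^ j * y \<in> K" using subfield_K \<theta>_K y by (intro subfield_C_mult subfield_C_pow)
      then show "(\<Sum>g\<in>T. g (\<theta> ^ j * y)) \<in> ?F'"
        using orbit_sum_in_fixed_field gen_field_subset by blast
    qed
    then show "y \<in> ?F'" using lagrange_orbit_sum_expansion[OF \<theta>_K y L(2)] L(3) by simp
  qed
qed

end

end

lemma power_eq_power_mod: "(z :: 'a :: monoid_mult) ^ d = 1 \<Longrightarrow> z ^ n = z ^ (n mod d)"
  by (metis div_mult_mod_eq mult.commute power_add power_mult power_one mult_1)

locale tildeG_setting =
  fixes k k1 :: "complex set"
    and G :: "('g, 'c) monoid_scheme" and H :: "('h, 'd) monoid_scheme"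
    and \<mu> :: "'g \<Rightarrow> 'h \<Rightarrow> 'h" and \<iota> :: "(complex \<Rightarrow> complex) \<Rightarrow> 'g"
    and \<tau> :: 'h and \<zeta> :: complex
  assumes group_G: "group G" and finite_G: "finite (carrier G)"
    and group_H: "group H" and finite_H: "finite (carrier H)"
    and \<mu>_hom: "\<mu> \<in> hom G (AutoGroup H)"
    and galois_k1: "galois_ext k1 k"
    and \<iota>_iso: "\<iota> \<in> iso (GalGroup k1 k) G"
    and \<tau>_H: "\<tau> \<in> carrier H"
    and primitive_\<zeta>: "primitive_root (group.ord H \<tau>) \<zeta>"
begin

abbreviation "K \<equiv> gen_field (k1 \<union> {\<zeta>})"
abbreviation "T \<equiv> tildeG k k1 G H \<iota> \<mu> \<tau> \<zeta>"
abbreviation "ord_\<tau> \<equiv> group.ord H \<tau>"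

lemma subfield_k1: "subfield_C k1" and k_k1: "k \<subseteq> k1"
  using galois_k1 by (auto simp: galois_ext_def)

lemma subfield_K: "subfield_C K"
  by (rule subfield_C_gen_field)

lemma k1_K: "k1 \<subseteq> K" and \<zeta>_K: "\<zeta> \<in> K"
  using gen_field_subset[of "k1 \<union> {\<zeta>}"] by auto

lemma k_K: "k \<subseteq> K"
  using k_k1 k1_K by blast

lemma finite_gal_aut_k1: "finite (gal_aut k1 k)"
proof -
  have "bij_betw \<iota> (gal_aut k1 k) (carrier G)"
    using \<iota>_iso by (simp add: iso_def GalGroup_def)
  then show ?thesis using finite_G bij_betw_finite by blast
qed

lemma gal_aut_K_image_k1: "g \<in> gal_aut K k \<Longrightarrow> g ` k1 = k1"
  by (rule gal_aut_image_galois_subfield[OF galois_k1 finite_gal_aut_k1 subfield_K k1_K])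

lemma gal_aut_K_restrict: "g \<in> gal_aut K k \<Longrightarrow> restrict g k1 \<in> gal_aut k1 k"
  by (rule restrict_gal_aut[OF subfield_k1 k_k1 k1_K _ gal_aut_K_image_k1])

lemma \<iota>_in: "\<sigma> \<in> gal_aut k1 k \<Longrightarrow> \<iota> \<sigma> \<in> carrier G"
  using hom_in_carrier[OF iso_imp_homomorphism[OF \<iota>_iso]] by (simp add: GalGroup_def)

lemma \<iota>_compose:
  "\<sigma> \<in> gal_aut k1 k \<Longrightarrow> \<rho> \<in> gal_aut k1 k \<Longrightarrow> \<iota> (compose k1 \<sigma> \<rho>) = \<iota> \<sigma> \<otimes>\<^bsub>G\<^esub> \<iota> \<rho>"
  using hom_mult[OF iso_imp_homomorphism[OF \<iota>_iso], of \<sigma> \<rho>] by (simp add: GalGroup_def)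

lemma \<iota>_id: "\<iota> (\<lambda>x\<in>k1. x) = \<one>\<^bsub>G\<^esub>"
proof -
  have id: "(\<lambda>x\<in>k1. x) \<in> gal_aut k1 k" by (rule gal_aut_id[OF subfield_k1 k_k1])
  have "compose k1 (\<lambda>x\<in>k1. x) (\<lambda>x\<in>k1. x) = (\<lambda>x\<in>k1. x)"
    by (auto simp: compose_def fun_eq_iff)
  then have "\<iota> (\<lambda>x\<in>k1. x) \<otimes>\<^bsub>G\<^esub> \<iota> (\<lambda>x\<in>k1. x) = \<iota> (\<lambda>x\<in>k1. x)"
    using \<iota>_compose[OF id id] by simp
  then show ?thesis using group.l_cancel_one[OF group_G \<iota>_in[OF id] \<iota>_in[OF id]] by simp
qed

lemma \<mu>_in_auto: "a \<in> carrier G \<Longrightarrow> \<mu> a \<in> auto H"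
  using hom_in_carrier[OF \<mu>_hom] by (simp add: AutoGroup_def BijGroup_def)

lemma \<mu>_mult:
  assumes "a \<in> carrier G" "b \<in> carrier G" "x \<in> carrier H"
  shows "\<mu> (a \<otimes>\<^bsub>G\<^esub> b) x = \<mu> a (\<mu> b x)"
proof -
  have "\<mu> (a \<otimes>\<^bsub>G\<^esub> b) = compose (carrier H) (\<mu> a) (\<mu> b)"
    using hom_mult[OF \<mu>_hom assms(1,2)] \<mu>_in_auto[OF assms(1)] \<mu>_in_auto[OF assms(2)]
    by (simp add: AutoGroup_def BijGroup_def auto_def)
  then show ?thesis using assms(3) by (simp add: compose_def)
qed

lemma \<mu>_one: "x \<in> carrier H \<Longrightarrow> \<mu> \<one>\<^bsub>G\<^esub> x = x"
  using hom_one[OF \<mu>_hom group_G group.AutoGroup[OF group_H]]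
  by (simp add: AutoGroup_def BijGroup_def)

lemma \<mu>_pow: "a \<in> carrier G \<Longrightarrow> \<mu> a (\<tau> [^]\<^bsub>H\<^esub> (n::nat)) = \<mu> a \<tau> [^]\<^bsub>H\<^esub> n"
  using hom_nat_pow[of "\<mu> a" H H \<tau> n] \<mu>_in_auto \<tau>_H group_H by (simp add: auto_def)

lemma \<zeta>_pow_mod: "\<zeta> ^ n = \<zeta> ^ (n mod ord_\<tau>)"
  using primitive_\<zeta> by (intro power_eq_power_mod) (simp add: primitive_root_def)

lemma tildeG_gal_aut: "T \<subseteq> gal_aut K k"
  unfolding tildeG_def by auto

lemma tildeG_compose:
  assumes f: "f \<in> T" and g: "g \<in> T"
  shows "compose K f g \<in> T"
proof -
  obtain m where m: "f \<zeta> = \<zeta> ^ m" "\<mu> (\<iota> (restrict f k1)) \<tau> = \<tau> [^]\<^bsub>H\<^esub> m"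
    and fG: "f \<in> gal_aut K k" using f unfolding tildeG_def by auto
  obtain n where n: "g \<zeta> = \<zeta> ^ n" "\<mu> (\<iota> (restrict g k1)) \<tau> = \<tau> [^]\<^bsub>H\<^esub> n"
    and gG: "g \<in> gal_aut K k" using g unfolding tildeG_def by auto
  have "compose K f g \<zeta> = f \<zeta> ^ n"
    using field_hom_on_pow[OF subfield_K gal_aut_field_hom_on[OF fG] \<zeta>_K] n(1) \<zeta>_K
      subfield_C_1[OF subfield_K] by (simp add: compose_def)
  then have \<zeta>_fg: "compose K f g \<zeta> = \<zeta> ^ (n * m)" using m(1) by (simp add: power_mult mult.commute)
  have rf: "restrict f k1 \<in> gal_aut k1 k" and rg: "restrict g k1 \<in> gal_aut k1 k"
    using gal_aut_K_restrict fG gG by auto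
  have "restrict (compose K f g) k1 = compose k1 (restrict f k1) (restrict g k1)"
    using k1_K gal_aut_K_image_k1[OF gG] by (auto simp: compose_def fun_eq_iff)
  then have "\<mu> (\<iota> (restrict (compose K f g) k1)) \<tau> = \<mu> (\<iota> (restrict f k1)) (\<tau> [^]\<^bsub>H\<^esub> n)"
    using \<iota>_compose[OF rf rg] \<mu>_mult[OF \<iota>_in[OF rf] \<iota>_in[OF rg] \<tau>_H] n(2) by simp
  also have "\<dots> = \<tau> [^]\<^bsub>H\<^esub> (n * m)"
    using \<mu>_pow[OF \<iota>_in[OF rf]] m(2) monoid.nat_pow_pow[OF group.is_monoid[OF group_H] \<tau>_H]
    by (simp add: mult.commute)
  finally show ?thesis
    using gal_aut_compose[OF gG fG subfield_K k_K] \<zeta>_fg unfolding tildeG_def by blast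
qed

lemma id_in_tildeG: "(\<lambda>x\<in>K. x) \<in> T"
proof -
  have "restrict (\<lambda>x\<in>K. x) k1 = (\<lambda>x\<in>k1. x)" using k1_K by (auto simp: fun_eq_iff)
  then have "\<mu> (\<iota> (restrict (\<lambda>x\<in>K. x) k1)) \<tau> = \<tau> [^]\<^bsub>H\<^esub> (1::nat)"
    using \<iota>_id \<mu>_one[OF \<tau>_H] monoid.nat_pow_eone[OF group.is_monoid[OF group_H] \<tau>_H] by simp
  moreover have "(\<lambda>x\<in>K. x) \<zeta> = \<zeta> ^ 1" using \<zeta>_K by simp
  ultimately show ?thesis
    using gal_aut_id[OF subfield_K k_K] unfolding tildeG_def by blast
qed

lemma gal_aut_K_eqI:
  assumes "f \<in> gal_aut K k" "g \<in> gal_aut K k" "\<And>x. x \<in> k1 \<Longrightarrow> f x = g x" "f \<zeta> = g \<zeta>"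
  shows "f = g"
proof (rule gal_aut_eqI[OF assms(1,2)])
  fix x assume x: "x \<in> K"
  note hom = gal_aut_field_hom_on[OF _ subfield_C_1[OF subfield_K]]
  show "f x = g x"
    by (rule field_hom_on_gen_field_eqI[OF hom[OF assms(1)] hom[OF assms(2)] _ x])
       (use assms(3,4) in auto)
qed

lemma finite_tildeG: "finite T"
proof -
  let ?f = "\<lambda>g. (restrict g k1, g \<zeta>)"
  have inj: "inj_on ?f T"
  proof (rule inj_onI)
    fix f g assume "f \<in> T" "g \<in> T" "?f f = ?f g"
    then show "f = g"
      using tildeG_gal_aut by (intro gal_aut_K_eqI) (auto simp: fun_eq_iff restrict_def split: if_splits)
  qed
  have "?f ` T \<subseteq> gal_aut k1 k \<times> (\<lambda>j. \<zeta> ^ j) ` {..<ord_\<tau>}"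
  proof
    fix p assume "p \<in> ?f ` T"
    then obtain g n where g: "g \<in> T" "p = ?f g" "g \<zeta> = \<zeta> ^ n"
      unfolding tildeG_def by blast
    have "ord_\<tau> > 0" using group.ord_ge_1[OF group_H finite_H \<tau>_H] by simp
    then show "p \<in> gal_aut k1 k \<times> (\<lambda>j. \<zeta> ^ j) ` {..<ord_\<tau>}"
      using g gal_aut_K_restrict tildeG_gal_aut \<zeta>_pow_mod[of n] by auto
  qed
  then have "finite (?f ` T)" by (rule finite_subset) (simp add: finite_gal_aut_k1)
  then show ?thesis using inj by (rule finite_imageD)
qed

lemma tildeG_faithful_on_k1:
  assumes h: "h \<in> T" and fixes_k1: "\<And>x. x \<in> k1 \<Longrightarrow> h x = x"
  shows "h = (\<lambda>x\<in>K. x)"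
proof -
  obtain n where n: "h \<zeta> = \<zeta> ^ n" "\<mu> (\<iota> (restrict h k1)) \<tau> = \<tau> [^]\<^bsub>H\<^esub> n"
    and hG: "h \<in> gal_aut K k" using h unfolding tildeG_def by auto
  have "restrict h k1 = (\<lambda>x\<in>k1. x)" using fixes_k1 by (auto simp: fun_eq_iff)
  then have "\<tau> [^]\<^bsub>H\<^esub> (1::int) = \<tau> [^]\<^bsub>H\<^esub> int n"
    using n(2) \<iota>_id \<mu>_one[OF \<tau>_H] group.int_pow_1[OF group_H \<tau>_H] by (simp add: int_pow_int)
  then have "int ord_\<tau> dvd int n - 1" using group.int_pow_eq[OF group_H \<tau>_H] by blast
  then have "n mod ord_\<tau> = 1 mod ord_\<tau>"
    by (metis mod_eq_dvd_iff of_nat_1 of_nat_eq_iff of_nat_mod)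
  then have "h \<zeta> = (\<lambda>x\<in>K. x) \<zeta>" using n(1) \<zeta>_pow_mod[of n] \<zeta>_pow_mod[of 1] \<zeta>_K by simp
  then show ?thesis
    using fixes_k1 k1_K by (intro gal_aut_K_eqI[OF hG gal_aut_id[OF subfield_K k_K]]) auto
qed

lemma finite_aut_group_tildeG: "finite_aut_group K T"
  using subfield_K finite_tildeG tildeG_gal_aut gal_aut_antimono[of "{}" k K] id_in_tildeG
    tildeG_compose by unfold_locales blast+

end

theorem mainTheorem15:
  fixes k k1 :: "complex set"
    and G :: "('g, 'c) monoid_scheme" and H :: "('h, 'd) monoid_scheme"
    and \<mu> :: "'g \<Rightarrow> 'h \<Rightarrow> 'h" and \<iota> :: "(complex \<Rightarrow> complex) \<Rightarrow> 'g"
    and \<tau> :: 'h and \<zeta> :: complex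
  assumes "number_field k"
    and "group G" and "finite (carrier G)"
    and "comm_group H" and "finite (carrier H)"
    and "\<mu> \<in> hom G (AutoGroup H)"
    and "galois_ext k1 k"
    and "\<iota> \<in> iso (GalGroup k1 k) G"
    and "\<tau> \<in> carrier H"
    and "primitive_root (group.ord H \<tau>) \<zeta>"
  shows "gen_field (k1 \<union> Zfield k k1 G H \<iota> \<mu> \<tau> \<zeta>) = gen_field (k1 \<union> {\<zeta>})"
proof -
  interpret tildeG_setting k k1 G H \<mu> \<iota> \<tau> \<zeta>
    using assms(2,3) comm_group.axioms(2)[OF assms(4)] assms(5-10) by (rule tildeG_setting.intro)
  interpret finite_aut_group K T
    by (rule finite_aut_group_tildeG)
  have "gen_field (k1 \<union> fixed_field K T) = K"
    using subfield_k1 k1_K gal_aut_K_image_k1 tildeG_gal_aut tildeG_faithful_on_k1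
    by (intro gen_field_fixed_field_eq) blast+
  then show ?thesis unfolding Zfield_def .
qed

end
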